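(* Let $N\ge 2$ and $0<\gamma_1\le\dots\le\gamma_N$. There exists a sum-rate optimal spanning tree $T$ on $\{1,\dots,N\}$ such that for every $0<i<N-1$, the vertex $N-i$ has at most one neighbor $u$ with $\gamma_u<\gamma_{N-i}$ (hence at least $\deg(N-i)-1$ neighbors with SNR at least $\gamma_{N-i}$), and $\deg(N-i)\le i+1$.
   Context: For distinct $i,j$ put $\varphi(i,j)=\log_2\!\big(\gamma_i+\frac{\gamma_i}{\gamma_i+\gamma_j}\big)$. For a spanning tree $T$ on $\{1,\dots,N\}$ with neighbor sets $A_i^T$, define $R_{\mathrm s}(T)=\frac{1}{2(N-1)}\sum_{i=1}^N \min_{j\in A_i^T}\varphi(i,j)$. A spanning tree is called sum-rate optimal if it maximizes $R_{\mathrm s}$ over all spanning trees on $\{1,\dots,N\}$. The value $\gamma_k$ is called the SNR of vertex $k$. *)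

theory Defs
  imports Complex_Main
begin

definition graph_edges :: "nat \<Rightarrow> nat set set \<Rightarrow> bool" where
  "graph_edges N E \<longleftrightarrow> (\<forall>e\<in>E. \<exists>i j. e = {i, j} \<and> i \<noteq> j \<and> i \<in> {1..N} \<and> j \<in> {1..N})"

definition nbrs :: "nat set set \<Rightarrow> nat \<Rightarrow> nat set" where
  "nbrs E i = {j. {i, j} \<in> E}"

definition adj_rel :: "nat set set \<Rightarrow> (nat \<times> nat) set" where
  "adj_rel E = {(i, j). {i, j} \<in> E}"

definition connected_on :: "nat \<Rightarrow> nat set set \<Rightarrow> bool" where
  "connected_on N E \<longleftrightarrow> (\<forall>i\<in>{1..N}. \<forall>j\<in>{1..N}. (i, j) \<in> (adj_rel E)\<^sup>*)"

definition spanning_tree :: "nat \<Rightarrow> nat set set \<Rightarrow> bool" where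
  "spanning_tree N E \<longleftrightarrow> graph_edges N E \<and> connected_on N E \<and> card E = N - 1"

definition phi :: "(nat \<Rightarrow> real) \<Rightarrow> nat \<Rightarrow> nat \<Rightarrow> real" where
  "phi \<gamma> i j = log 2 (\<gamma> i + \<gamma> i / (\<gamma> i + \<gamma> j))"

definition Rs :: "(nat \<Rightarrow> real) \<Rightarrow> nat \<Rightarrow> nat set set \<Rightarrow> real" where
  "Rs \<gamma> N E = (1 / (2 * (real N - 1))) * (\<Sum>i=1..N. Min (phi \<gamma> i ` nbrs E i))"

definition sum_rate_optimal :: "(nat \<Rightarrow> real) \<Rightarrow> nat \<Rightarrow> nat set set \<Rightarrow> bool" where
  "sum_rate_optimal \<gamma> N E \<longleftrightarrow> spanning_tree N E \<and>
     (\<forall>E'. spanning_tree N E' \<longrightarrow> Rs \<gamma> N E' \<le> Rs \<gamma> N E)"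

end

theory Submission
  imports Defs
begin

text \<open>Among the sum-rate optimal spanning trees choose one minimising the total weight
  \<open>\<Sum>{i,j}\<in>E. max i j\<close>. If a vertex \<open>k\<close> had two neighbours \<open>a, b < k\<close>, replacing the edge
  \<open>{k,b}\<close> by \<open>{a,b}\<close> would again give a spanning tree in which every vertex keeps, for each
  new neighbour, an old neighbour of at least the same SNR; since \<open>\<phi>(i,j)\<close> is antitone in
  \<open>\<gamma>\<^sub>j\<close>, the sum rate does not drop, while the weight strictly decreases. Hence every
  vertex \<open>k\<close> has at most one neighbour of smaller index, and therefore at most \<open>1 + (N - k)\<close>
  neighbours altogether.\<close>

definition tree_weight :: "nat set set \<Rightarrow> nat" where
  "tree_weight E = (\<Sum>e\<in>E. Max e)"

lemma graph_edgesD: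
  assumes "graph_edges N E" "{i, j} \<in> E"
  shows "i \<in> {1..N}" "j \<in> {1..N}" "i \<noteq> j"
proof -
  obtain x y where "{i, j} = {x, y}" "x \<noteq> y" "x \<in> {1..N}" "y \<in> {1..N}"
    using assms unfolding graph_edges_def by blast
  then show "i \<in> {1..N}" "j \<in> {1..N}" "i \<noteq> j" by (auto simp: doubleton_eq_iff)
qed

lemma finite_graph_edges:
  assumes "graph_edges N E"
  shows "finite E"
proof -
  have "E \<subseteq> Pow {1..N}" using assms unfolding graph_edges_def by auto
  then show ?thesis by (rule finite_subset) simp
qed

lemma graph_edges_subset:
  assumes "graph_edges N E" "F \<subseteq> E"
  shows "graph_edges N F"
  using assms unfolding graph_edges_def by blast

lemma graph_edges_insert:
  assumes "graph_edges N E" "i \<in> {1..N}" "j \<in> {1..N}" "i \<noteq> j"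
  shows "graph_edges N (insert {i, j} E)"
  using assms unfolding graph_edges_def by blast

lemma nbrs_subset:
  assumes "graph_edges N E"
  shows "nbrs E i \<subseteq> {1..N}"
  using graph_edgesD[OF assms] unfolding nbrs_def by blast

lemma finite_nbrs:
  assumes "graph_edges N E"
  shows "finite (nbrs E i)"
  using nbrs_subset[OF assms] by (rule finite_subset) simp

lemma nbrs_nonempty:
  assumes "connected_on N E" "N \<ge> 2" "i \<in> {1..N}"
  shows "nbrs E i \<noteq> {}"
proof -
  define j where "j = (if i = 1 then 2 else (1::nat))"
  have j: "j \<in> {1..N}" "j \<noteq> i" using assms(2,3) unfolding j_def by auto
  have "(i, j) \<in> (adj_rel E)\<^sup>*" using assms(1,3) j(1) unfolding connected_on_def by auto
  then obtain y where "(i, y) \<in> adj_rel E"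
    using j(2) by (cases rule: converse_rtranclE) auto
  then show ?thesis unfolding nbrs_def adj_rel_def by auto
qed

text \<open>Every vertex \<open>v \<ge> 2\<close> is joined to a vertex one step closer to \<open>1\<close>; these edges are
  pairwise distinct because distance strictly increases along each of them.\<close>

lemma connected_on_card_ge:
  assumes ge: "graph_edges N E" and cn: "connected_on N E" and "N \<ge> 1"
  shows "N - 1 \<le> card E"
proof -
  define R where "R = adj_rel E"
  define d where "d v = (LEAST n. (1::nat, v) \<in> R ^^ n)" for v
  have dI: "(1, v) \<in> R ^^ d v" if "(1, v) \<in> R ^^ n" for v n
    unfolding d_def using that by (rule LeastI)
  have d_le: "d v \<le> n" if "(1, v) \<in> R ^^ n" for v n
    unfolding d_def using that by (rule Least_le)
  have parent: "\<exists>u. (u, v) \<in> R \<and> Suc (d u) = d v" if v: "v \<in> {2..N}" for v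
  proof -
    have "(1, v) \<in> R\<^sup>*" using cn v \<open>N \<ge> 1\<close> unfolding connected_on_def R_def by auto
    then obtain n where "(1, v) \<in> R ^^ n" using rtrancl_power by blast
    then have dv: "(1, v) \<in> R ^^ d v" by (rule dI)
    then have "d v \<noteq> 0" using v by (intro notI) simp
    then obtain m where m: "d v = Suc m" by (cases "d v") auto
    with dv obtain u where u: "(1, u) \<in> R ^^ m" and uv: "(u, v) \<in> R" by auto
    have "(1, v) \<in> R ^^ Suc (d u)" using dI[OF u] uv by auto
    then have "d v \<le> Suc (d u)" by (rule d_le)
    with d_le[OF u] m have "Suc (d u) = d v" by simp
    with uv show ?thesis by blast
  qed
  then obtain p where p: "\<And>v. v \<in> {2..N} \<Longrightarrow> (p v, v) \<in> R \<and> Suc (d (p v)) = d v"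
    by metis
  define f where "f v = {p v, v}" for v
  have "f ` {2..N} \<subseteq> E" using p unfolding f_def R_def adj_rel_def by auto
  moreover have "inj_on f {2..N}"
  proof (rule inj_onI)
    fix v w assume v: "v \<in> {2..N}" and w: "w \<in> {2..N}" and "f v = f w"
    then have "(p v = p w \<and> v = w) \<or> (p v = w \<and> v = p w)"
      unfolding f_def by (auto simp: doubleton_eq_iff)
    with p[OF v] p[OF w] show "v = w" by auto
  qed
  ultimately have "card {2..N} \<le> card E"
    using card_inj_on_le finite_graph_edges[OF ge] by blast
  then show ?thesis by simp
qed

lemma connected_on_exchange:
  assumes "connected_on N E" "{k, a} \<in> F" "{a, b} \<in> F" "E - {{k, b}} \<subseteq> F"
  shows "connected_on N F"
proof -
  have "adj_rel E \<subseteq> (adj_rel F)\<^sup>*"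
  proof (rule subrelI)
    fix x y assume "(x, y) \<in> adj_rel E"
    then have xy: "{x, y} \<in> E" unfolding adj_rel_def by auto
    show "(x, y) \<in> (adj_rel F)\<^sup>*"
    proof (cases "{x, y} = {k, b}")
      case True
      have "(k, a) \<in> adj_rel F" "(a, k) \<in> adj_rel F" "(a, b) \<in> adj_rel F" "(b, a) \<in> adj_rel F"
        using assms(2,3) unfolding adj_rel_def by (auto simp: insert_commute)
      moreover from True have "(x = k \<and> y = b) \<or> (x = b \<and> y = k)"
        by (auto simp: doubleton_eq_iff)
      ultimately show ?thesis by (meson converse_rtrancl_into_rtrancl r_into_rtrancl)
    next
      case False
      then show ?thesis using xy assms(4) unfolding adj_rel_def by auto
    qed
  qed
  then have "(adj_rel E)\<^sup>* \<subseteq> (adj_rel F)\<^sup>*" by (rule rtrancl_subset_rtrancl)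
  then show ?thesis using assms(1) unfolding connected_on_def by auto
qed

lemma spanning_tree_no_triangle:
  assumes st: "spanning_tree N E" and "N \<ge> 2"
    and "{k, a} \<in> E" "{k, b} \<in> E" "a \<noteq> b"
  shows "{a, b} \<notin> E"
proof
  assume ab: "{a, b} \<in> E"
  have ge: "graph_edges N E" and cn: "connected_on N E" and cE: "card E = N - 1"
    using st unfolding spanning_tree_def by auto
  define F where "F = E - {{k, b}}"
  have "a \<noteq> k" using graph_edgesD(3)[OF ge \<open>{k, a} \<in> E\<close>] by simp
  then have "{k, a} \<noteq> {k, b}" "{a, b} \<noteq> {k, b}"
    using \<open>a \<noteq> b\<close> by (auto simp: doubleton_eq_iff)
  then have "{k, a} \<in> F" "{a, b} \<in> F" using \<open>{k, a} \<in> E\<close> ab unfolding F_def by auto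
  then have "connected_on N F" by (rule connected_on_exchange[OF cn]) (simp add: F_def)
  moreover have "graph_edges N F" using ge by (rule graph_edges_subset) (simp add: F_def)
  ultimately have "N - 1 \<le> card F" using \<open>N \<ge> 2\<close> by (intro connected_on_card_ge) auto
  moreover have "card F = N - 2"
    using cE \<open>{k, b} \<in> E\<close> finite_graph_edges[OF ge] unfolding F_def by simp
  ultimately show False using \<open>N \<ge> 2\<close> by simp
qed

lemma spanning_tree_exchange:
  assumes st: "spanning_tree N E" and "N \<ge> 2"
    and ka: "{k, a} \<in> E" and kb: "{k, b} \<in> E" and "a \<noteq> b"
  shows "spanning_tree N (insert {a, b} (E - {{k, b}}))"
proof -
  have ge: "graph_edges N E" and cn: "connected_on N E" and cE: "card E = N - 1"
    using st unfolding spanning_tree_def by auto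
  have "{a, b} \<notin> E" using spanning_tree_no_triangle[OF st \<open>N \<ge> 2\<close> ka kb \<open>a \<noteq> b\<close>] .
  then have "card (insert {a, b} (E - {{k, b}})) = N - 1"
    using cE kb finite_graph_edges[OF ge] \<open>N \<ge> 2\<close> by simp
  moreover have "graph_edges N (insert {a, b} (E - {{k, b}}))"
    using graph_edgesD(2)[OF ge ka] graph_edgesD(2)[OF ge kb] \<open>a \<noteq> b\<close>
    by (intro graph_edges_insert graph_edges_subset[OF ge]) auto
  moreover have "{k, a} \<in> E - {{k, b}}" using ka \<open>a \<noteq> b\<close> by (auto simp: doubleton_eq_iff)
  then have "connected_on N (insert {a, b} (E - {{k, b}}))"
    by (intro connected_on_exchange[OF cn, where k = k and a = a and b = b]) auto
  ultimately show ?thesis unfolding spanning_tree_def by simp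
qed

lemma spanning_tree_star: "spanning_tree N ((\<lambda>j. {1, j}) ` {2..N})"
proof -
  let ?E = "(\<lambda>j. {1::nat, j}) ` {2..N}"
  have "graph_edges N ?E" unfolding graph_edges_def by force
  moreover have "inj_on (\<lambda>j. {1::nat, j}) {2..N}"
    by (rule inj_onI) (auto simp: doubleton_eq_iff)
  then have "card ?E = N - 1" by (simp add: card_image)
  moreover have "(i, 1) \<in> adj_rel ?E" "(1, i) \<in> adj_rel ?E" if "i \<in> {2..N}" for i
    using that unfolding adj_rel_def by (auto simp: insert_commute)
  then have "(i, 1) \<in> (adj_rel ?E)\<^sup>*" "(1, i) \<in> (adj_rel ?E)\<^sup>*" if "i \<in> {1..N}" for i
    using that by (cases "i = 1"; force)+
  then have "connected_on N ?E" unfolding connected_on_def by (meson rtrancl_trans)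
  ultimately show ?thesis unfolding spanning_tree_def by simp
qed

lemma finite_spanning_trees: "finite {E. spanning_tree N E}"
proof -
  have "{E. spanning_tree N E} \<subseteq> Pow (Pow {1..N})"
    unfolding spanning_tree_def graph_edges_def by auto
  then show ?thesis by (rule finite_subset) simp
qed

lemma sum_rate_optimal_exists: "\<exists>E. sum_rate_optimal \<gamma> N E"
proof -
  let ?T = "{E. spanning_tree N E}"
  have "Rs \<gamma> N ` ?T \<noteq> {}" using spanning_tree_star by blast
  then have "Max (Rs \<gamma> N ` ?T) \<in> Rs \<gamma> N ` ?T"
    using finite_spanning_trees by (intro Max_in) auto
  then obtain E where "E \<in> ?T" "Rs \<gamma> N E = Max (Rs \<gamma> N ` ?T)" by auto
  then show ?thesis
    unfolding sum_rate_optimal_def using finite_spanning_trees by auto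
qed

lemma phi_antimono:
  assumes "\<gamma> i > 0" "\<gamma> j' > 0" "\<gamma> j' \<le> \<gamma> j"
  shows "phi \<gamma> i j \<le> phi \<gamma> i j'"
proof -
  have "\<gamma> i / (\<gamma> i + \<gamma> j) \<le> \<gamma> i / (\<gamma> i + \<gamma> j')"
    using assms by (intro divide_left_mono) auto
  moreover have "0 < \<gamma> i + \<gamma> i / (\<gamma> i + \<gamma> j')" using assms by (simp add: add_pos_nonneg)
  moreover have "0 < \<gamma> i + \<gamma> i / (\<gamma> i + \<gamma> j)" using assms by (simp add: add_pos_nonneg)
  ultimately show ?thesis unfolding phi_def by simp
qed

lemma Rs_le_if_nbrs_dominated:
  assumes "N \<ge> 2" and pos: "\<forall>j\<in>{1..N}. \<gamma> j > 0"
    and ge: "graph_edges N E" "graph_edges N E'" and cn': "connected_on N E'"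
    and dom: "\<forall>i\<in>{1..N}. \<forall>j'\<in>nbrs E' i. \<exists>j\<in>nbrs E i. \<gamma> j' \<le> \<gamma> j"
  shows "Rs \<gamma> N E \<le> Rs \<gamma> N E'"
proof -
  have "Min (phi \<gamma> i ` nbrs E i) \<le> Min (phi \<gamma> i ` nbrs E' i)" if i: "i \<in> {1..N}" for i
  proof (rule Min.boundedI)
    show "finite (phi \<gamma> i ` nbrs E' i)" using finite_nbrs[OF ge(2)] by simp
    show "phi \<gamma> i ` nbrs E' i \<noteq> {}" using nbrs_nonempty[OF cn' \<open>N \<ge> 2\<close> i] by simp
    fix x assume "x \<in> phi \<gamma> i ` nbrs E' i"
    then obtain j' where j': "j' \<in> nbrs E' i" "x = phi \<gamma> i j'" by auto
    then obtain j where j: "j \<in> nbrs E i" "\<gamma> j' \<le> \<gamma> j" using dom i by blast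
    have "Min (phi \<gamma> i ` nbrs E i) \<le> phi \<gamma> i j" using j finite_nbrs[OF ge(1)] by simp
    also have "\<dots> \<le> phi \<gamma> i j'"
      using phi_antimono pos i j j' nbrs_subset[OF ge(2)] by blast
    finally show "Min (phi \<gamma> i ` nbrs E i) \<le> x" using j' by simp
  qed
  then have "(\<Sum>i=1..N. Min (phi \<gamma> i ` nbrs E i)) \<le> (\<Sum>i=1..N. Min (phi \<gamma> i ` nbrs E' i))"
    by (intro sum_mono) auto
  then show ?thesis unfolding Rs_def using \<open>N \<ge> 2\<close> by (intro mult_left_mono) auto
qed

lemma sum_rate_optimal_exchange:
  assumes "N \<ge> 2" and pos: "\<forall>j\<in>{1..N}. \<gamma> j > 0"
    and mono: "\<And>i j. 1 \<le> i \<Longrightarrow> i \<le> j \<Longrightarrow> j \<le> N \<Longrightarrow> \<gamma> i \<le> \<gamma> j"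
    and opt: "sum_rate_optimal \<gamma> N E"
    and ka: "{k, a} \<in> E" and kb: "{k, b} \<in> E" and "a \<noteq> b" "a < k" "b < k"
  shows "sum_rate_optimal \<gamma> N (insert {a, b} (E - {{k, b}}))"
proof -
  let ?E' = "insert {a, b} (E - {{k, b}})"
  have st: "spanning_tree N E" using opt unfolding sum_rate_optimal_def by simp
  have ge: "graph_edges N E" using st unfolding spanning_tree_def by simp
  have st': "spanning_tree N ?E'" using spanning_tree_exchange[OF st] assms by blast
  have "\<exists>j\<in>nbrs E i. \<gamma> j' \<le> \<gamma> j" if "j' \<in> nbrs ?E' i" for i j'
  proof (cases "{i, j'} = {a, b}")
    case True
    have "k \<in> nbrs E a" "k \<in> nbrs E b" using ka kb unfolding nbrs_def by (auto simp: insert_commute)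
    moreover have "\<gamma> a \<le> \<gamma> k" "\<gamma> b \<le> \<gamma> k"
      using mono graph_edgesD[OF ge ka] graph_edgesD[OF ge kb] \<open>a < k\<close> \<open>b < k\<close> by auto
    ultimately show ?thesis using True by (auto simp: doubleton_eq_iff)
  next
    case False
    then have "j' \<in> nbrs E i" using that unfolding nbrs_def by auto
    then show ?thesis by auto
  qed
  then have "Rs \<gamma> N E \<le> Rs \<gamma> N ?E'"
    using Rs_le_if_nbrs_dominated[OF \<open>N \<ge> 2\<close> pos ge] st' unfolding spanning_tree_def by blast
  with opt st' show ?thesis unfolding sum_rate_optimal_def by force
qed

lemma card_lower_nbrs_le_one:
  assumes "N \<ge> 2" and pos: "\<forall>j\<in>{1..N}. \<gamma> j > 0"
    and mono: "\<And>i j. 1 \<le> i \<Longrightarrow> i \<le> j \<Longrightarrow> j \<le> N \<Longrightarrow> \<gamma> i \<le> \<gamma> j"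
    and opt: "sum_rate_optimal \<gamma> N E"
    and min: "\<And>E'. sum_rate_optimal \<gamma> N E' \<Longrightarrow> tree_weight E \<le> tree_weight E'"
  shows "card {u \<in> nbrs E k. u < k} \<le> 1"
proof -
  have st: "spanning_tree N E" using opt unfolding sum_rate_optimal_def by simp
  have ge: "graph_edges N E" using st unfolding spanning_tree_def by simp
  have "a = b" if "a \<in> nbrs E k" "b \<in> nbrs E k" "a < k" "b < k" for a b
  proof (rule ccontr)
    assume "a \<noteq> b"
    have ka: "{k, a} \<in> E" and kb: "{k, b} \<in> E" using that unfolding nbrs_def by auto
    let ?F = "E - {{k, b}}"
    have fin: "finite ?F" using finite_graph_edges[OF ge] by simp
    have "{a, b} \<notin> ?F" using spanning_tree_no_triangle[OF st] assms ka kb \<open>a \<noteq> b\<close> by blast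
    then have "tree_weight (insert {a, b} ?F) = Max {a, b} + tree_weight ?F"
      unfolding tree_weight_def using fin by simp
    also have "\<dots> < Max {k, b} + tree_weight ?F" using \<open>a < k\<close> \<open>b < k\<close> by simp
    also have "\<dots> = tree_weight E"
      unfolding tree_weight_def using kb finite_graph_edges[OF ge] by (simp add: sum.remove)
    finally show False
      using min sum_rate_optimal_exchange[OF assms(1-4) ka kb \<open>a \<noteq> b\<close> that(3,4)]
      by (simp add: leD)
  qed
  moreover have "finite {u \<in> nbrs E k. u < k}" using finite_nbrs[OF ge] by simp
  ultimately show ?thesis by (auto simp: One_nat_def card_le_Suc0_iff_eq)
qed

lemma card_nbrs_le:
  assumes "graph_edges N E"
  shows "card (nbrs E k) \<le> card {u \<in> nbrs E k. u < k} + (N - k)"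
proof -
  have "nbrs E k \<subseteq> {u \<in> nbrs E k. u < k} \<union> {k<..N}"
  proof
    fix u assume u: "u \<in> nbrs E k"
    then have "u \<noteq> k" "u \<le> N"
      using graph_edgesD(2,3)[OF assms, of k u] unfolding nbrs_def by auto
    with u show "u \<in> {u \<in> nbrs E k. u < k} \<union> {k<..N}" by auto
  qed
  then have "card (nbrs E k) \<le> card ({u \<in> nbrs E k. u < k} \<union> {k<..N})"
    by (intro card_mono) (use finite_nbrs[OF assms] in auto)
  also have "\<dots> \<le> card {u \<in> nbrs E k. u < k} + (N - k)"
    using card_Un_le[of "{u \<in> nbrs E k. u < k}" "{k<..N}"] by simp
  finally show ?thesis .
qed

theorem lemma3:
  fixes N :: nat and \<gamma> :: "nat \<Rightarrow> real"
  assumes "N \<ge> 2"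
    and "\<gamma> 1 > 0"
    and "\<And>i j. 1 \<le> i \<Longrightarrow> i \<le> j \<Longrightarrow> j \<le> N \<Longrightarrow> \<gamma> i \<le> \<gamma> j"
  shows "\<exists>E. sum_rate_optimal \<gamma> N E \<and>
           (\<forall>i. 0 < i \<and> i < N - 1 \<longrightarrow>
              card {u \<in> nbrs E (N - i). \<gamma> u < \<gamma> (N - i)} \<le> 1 \<and>
              card (nbrs E (N - i)) \<le> i + 1)"
proof -
  have pos: "\<forall>j\<in>{1..N}. \<gamma> j > 0"
  proof
    fix j assume "j \<in> {1..N}"
    then have "\<gamma> 1 \<le> \<gamma> j" using assms(3)[of 1 j] by simp
    with assms(2) show "\<gamma> j > 0" by simp
  qed
  obtain E0 where "sum_rate_optimal \<gamma> N E0" using sum_rate_optimal_exists by blast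
  then obtain E where opt: "sum_rate_optimal \<gamma> N E"
    and min: "\<forall>E'. sum_rate_optimal \<gamma> N E' \<longrightarrow> tree_weight E \<le> tree_weight E'"
    using ex_has_least_nat[of "sum_rate_optimal \<gamma> N" E0 tree_weight] by blast
  have ge: "graph_edges N E" using opt unfolding sum_rate_optimal_def spanning_tree_def by simp
  have bound: "card {u \<in> nbrs E k. \<gamma> u < \<gamma> k} \<le> 1 \<and> card (nbrs E k) \<le> N - k + 1"
    if "1 \<le> k" "k \<le> N" for k
  proof -
    have lower: "card {u \<in> nbrs E k. u < k} \<le> 1"
      using card_lower_nbrs_le_one[OF assms(1) pos assms(3) opt min[rule_format]] .
    have "u < k" if "u \<in> nbrs E k" "\<gamma> u < \<gamma> k" for u
    proof (rule ccontr)
      assume "\<not> u < k"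
      moreover have "u \<le> N" using nbrs_subset[OF ge, of k] that(1) by auto
      ultimately have "\<gamma> k \<le> \<gamma> u" using assms(3)[of k u] \<open>1 \<le> k\<close> by simp
      with that(2) show False by simp
    qed
    then have "{u \<in> nbrs E k. \<gamma> u < \<gamma> k} \<subseteq> {u \<in> nbrs E k. u < k}" by blast
    moreover have "finite {u \<in> nbrs E k. u < k}" using finite_nbrs[OF ge] by simp
    ultimately have "card {u \<in> nbrs E k. \<gamma> u < \<gamma> k} \<le> 1"
      using card_mono lower by (metis le_trans)
    with lower card_nbrs_le[OF ge, of k] show ?thesis by simp
  qed
  show ?thesis
  proof (intro exI[of _ E] conjI[OF opt] allI impI)
    fix i assume "0 < i \<and> i < N - 1"
    then have "1 \<le> N - i" "N - i \<le> N" "N - (N - i) + 1 = i + 1" by auto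
    then show "card {u \<in> nbrs E (N - i). \<gamma> u < \<gamma> (N - i)} \<le> 1 \<and>
        card (nbrs E (N - i)) \<le> i + 1" using bound[of "N - i"] by simp
  qed
qed

end
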